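(* For every integer $n\ge 0$, $|\mathfrak D^2_{2n}(3142)|=C_n=\frac{1}{n+1}\binom{2n}{n}$, the $n$th Catalan number.
   Context: A Dumont permutation of the second kind of length $2n$ is a permutation $\pi\in\mathfrak S_{2n}$ such that for every $i=1,\dots,n$ one has $\pi(2i)<2i$ and $\pi(2i-1)\ge 2i-1$. $\mathfrak D^2_{2n}$ denotes the set of these ($\mathfrak D^2_0$ consists of the empty permutation). A permutation $\sigma$ contains a pattern $\tau\in\mathfrak S_k$ if some subsequence $(\sigma(i_1),\dots,\sigma(i_k))$, $i_1<\dots<i_k$, is order-isomorphic to $\tau$; otherwise $\sigma$ avoids $\tau$. $\mathfrak D^2_{2n}(T)$ denotes the set of permutations in $\mathfrak D^2_{2n}$ avoiding every pattern in $T$. *)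

theory Defs
  imports "HOL-Combinatorics.Permutations" "HOL-Library.Disjoint_Sets"
begin

text \<open>Permutations of length m are bijections of {1..m}, fixing everything else.
  A pattern tau of length k is given as the list [tau(1),...,tau(k)].\<close>

definition contains_pattern :: "(nat \<Rightarrow> nat) \<Rightarrow> nat \<Rightarrow> nat list \<Rightarrow> bool" where
  "contains_pattern \<sigma> m \<tau> \<longleftrightarrow>
     (\<exists>idx :: nat \<Rightarrow> nat.
        (\<forall>a < length \<tau>. idx a \<in> {1..m}) \<and>
        (\<forall>a b. a < b \<and> b < length \<tau> \<longrightarrow> idx a < idx b) \<and>
        (\<forall>a < length \<tau>. \<forall>b < length \<tau>.
            (\<sigma> (idx a) < \<sigma> (idx b)) \<longleftrightarrow> (\<tau> ! a < \<tau> ! b)))"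

definition avoids :: "(nat \<Rightarrow> nat) \<Rightarrow> nat \<Rightarrow> nat list \<Rightarrow> bool" where
  "avoids \<sigma> m \<tau> \<longleftrightarrow> \<not> contains_pattern \<sigma> m \<tau>"

definition dumont2 :: "nat \<Rightarrow> (nat \<Rightarrow> nat) set" where
  "dumont2 n = {\<pi>. \<pi> permutes {1..2*n} \<and>
      (\<forall>i\<in>{1..n}. \<pi> (2*i) < 2*i \<and> \<pi> (2*i - 1) \<ge> 2*i - 1)}"

definition dumont2_av :: "nat \<Rightarrow> nat list set \<Rightarrow> (nat \<Rightarrow> nat) set" where
  "dumont2_av n T = {\<pi> \<in> dumont2 n. \<forall>\<tau>\<in>T. avoids \<pi> (2*n) \<tau>}"

definition catalan :: "nat \<Rightarrow> nat" where
  "catalan n = (2*n choose n) div (n+1)"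

end

theory Submission
  imports Defs "HOL-Computational_Algebra.Formal_Power_Series"
begin

(* In a Dumont permutation of the second kind of length 2n+2 the maximum 2n+2 sits at an odd
   position 2k+1. Avoiding 3142, with this maximum playing the role of the 4, forces every value to
   its right to exceed 2k. Hence the permutation reads alpha, 2n+2, 2k+1, followed by the
   reverse-complement of some beta shifted into {2k+2..2n+1}, where alpha and beta are
   3142-avoiding Dumont permutations of lengths 2k and 2(n-k); conversely every such gluing is one.
   So the numbers satisfy the Catalan convolution recurrence, which is solved through the
   generating function C = 1 + x C^2. *)

section \<open>The Catalan recurrence\<close>

lemma convolution_recurrence_imp_ratio_recurrence:
  fixes a :: "nat \<Rightarrow> nat"
  assumes a0: "a 0 = 1" and aSuc: "\<And>n. a (Suc n) = (\<Sum>k\<le>n. a k * a (n - k))"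
  shows "(n + 2) * a (Suc n) = (4 * n + 2) * a n"
proof -
  define A :: "real fps" where "A = Abs_fps (\<lambda>n. real (a n))"
  have quadratic: "A = 1 + fps_X * A\<^sup>2"
  proof (rule fps_ext)
    fix m
    show "fps_nth A m = fps_nth (1 + fps_X * A\<^sup>2) m"
    proof (cases m)
      case (Suc j)
      have "fps_nth (fps_X * A\<^sup>2) m = fps_nth (A * A) j"
        by (simp add: Suc power2_eq_square)
      then show ?thesis
        by (simp add: Suc A_def aSuc fps_mult_nth atLeast0AtMost)
    qed (simp add: A_def a0)
  qed
  \<comment> \<open>\<open>D\<close> is the power series \<open>sqrt (1 - 4X)\<close>, which solves a linear differential equation.\<close>
  define D where "D = 1 - 2 * fps_X * A"
  have "D * D = 1 - 4 * fps_X * (A - fps_X * A\<^sup>2)"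
    by (simp add: D_def algebra_simps power2_eq_square)
  also have "A - fps_X * A\<^sup>2 = 1"
    by (subst (1) quadratic) simp
  finally have square: "D * D = 1 - 4 * fps_X"
    by simp
  have "2 * D * fps_deriv D = - 4"
    using arg_cong[OF square, of fps_deriv] by (simp add: fps_deriv_mult algebra_simps)
  then have ode: "(1 - 4 * fps_X) * fps_deriv D * 2 = - 4 * D"
    by (metis square mult.assoc mult.commute)
  have D_Suc: "fps_nth D (Suc j) = - 2 * real (a j)" for j
    by (simp add: D_def A_def numeral_fps_const mult.assoc)
  have "fps_nth ((1 - 4 * fps_X) * fps_deriv D * 2) (Suc n) = fps_nth (- 4 * D) (Suc n)"
    by (simp only: ode)
  then have "(real (n + 2) * fps_nth D (n + 2) - 4 * real (n + 1) * fps_nth D (n + 1)) * 2 = - 4 * fps_nth D (Suc n)"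
    by (simp add: algebra_simps numeral_fps_const)
  then have "real ((n + 2) * a (Suc n)) = real ((4 * n + 2) * a n)"
    by (simp add: D_Suc algebra_simps)
  then show ?thesis
    by (simp only: of_nat_eq_iff)
qed

lemma central_binomial_Suc: "(n + 1) * (2 * Suc n choose Suc n) = 2 * (2 * n + 1) * (2 * n choose n)"
proof -
  have "(n + 1) * ((n + 1) * (2 * Suc n choose Suc n)) = (n + 1) * (2 * ((n + 1) * (Suc (2 * n) choose n)))"
    using Suc_times_binomial_eq[of "Suc (2 * n)" n] by (simp del: binomial_Suc_Suc add: algebra_simps)
  also have "(n + 1) * (Suc (2 * n) choose n) = (2 * n + 1) * (2 * n choose n)"
    using Suc_times_binomial_eq[of "2 * n" n] binomial_symmetric[of "Suc n" "Suc (2 * n)"]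
    by (simp del: binomial_Suc_Suc add: algebra_simps)
  finally show ?thesis
    by (subst (asm) mult_left_cancel) (simp_all del: binomial_Suc_Suc add: algebra_simps)
qed

lemma convolution_recurrence_closed_form:
  fixes a :: "nat \<Rightarrow> nat"
  assumes a0: "a 0 = 1" and aSuc: "\<And>n. a (Suc n) = (\<Sum>k\<le>n. a k * a (n - k))"
  shows "(n + 1) * a n = 2 * n choose n"
proof (induction n)
  case 0
  then show ?case by (simp add: a0)
next
  case (Suc n)
  have "(n + 1) * ((Suc n + 1) * a (Suc n)) = (n + 1) * ((4 * n + 2) * a n)"
    using convolution_recurrence_imp_ratio_recurrence[OF a0 aSuc, of n] by simp
  also have "\<dots> = 2 * (2 * n + 1) * ((n + 1) * a n)"
    by (simp add: algebra_simps)
  also have "\<dots> = (n + 1) * (2 * Suc n choose Suc n)"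
    by (simp only: Suc central_binomial_Suc)
  finally show ?case
    by (subst (asm) mult_left_cancel) simp_all
qed

lemma bij_betw_reflect:
  fixes a b N :: nat
  assumes "a \<le> N" "b \<le> N"
  shows "bij_betw (\<lambda>i. N - i) {a..b} {N - b..N - a}"
proof (rule bij_betw_imageI)
  show "inj_on (\<lambda>i. N - i) {a..b}"
    using assms by (auto simp: inj_on_def)
  show "(\<lambda>i. N - i) ` {a..b} = {N - b..N - a}"
  proof
    show "{N - b..N - a} \<subseteq> (\<lambda>i. N - i) ` {a..b}"
    proof
      fix y assume "y \<in> {N - b..N - a}"
      then show "y \<in> (\<lambda>i. N - i) ` {a..b}"
        using assms by (intro image_eqI[of _ _ "N - y"]) auto
    qed
  qed (use assms in auto)
qed

lemma bij_betw_reverse_complement: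
  fixes a b c d N M :: nat
  assumes "bij_betw f {a..b} {c..d}" "a \<le> N" "b \<le> N" "c \<le> M" "d \<le> M"
  shows "bij_betw (\<lambda>i. M - f (N - i)) {N - b..N - a} {M - d..M - c}"
proof -
  have "bij_betw (\<lambda>i. N - i) {N - b..N - a} {a..b}"
    using bij_betw_reflect[of "N - b" N "N - a"] assms by simp
  then have "bij_betw (f \<circ> (\<lambda>i. N - i)) {N - b..N - a} {c..d}"
    using assms(1) by (rule bij_betw_trans)
  moreover have "bij_betw (\<lambda>v. M - v) {c..d} {M - d..M - c}"
    using assms by (intro bij_betw_reflect)
  ultimately have "bij_betw ((\<lambda>v. M - v) \<circ> (f \<circ> (\<lambda>i. N - i))) {N - b..N - a} {M - d..M - c}"
    by (rule bij_betw_trans)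
  then show ?thesis
    by (simp add: comp_def)
qed

lemma permutes_image_eq_if_complement_stable:
  assumes "p permutes S" "finite S" "T \<subseteq> S" "p ` (S - T) \<subseteq> S - T"
  shows "p ` T = T"
proof -
  have "p ` (S - T) = S - T"
    using assms by (intro endo_inj_surj) (auto intro: permutes_inj_on)
  moreover have "p ` (S - (S - T)) = p ` S - p ` (S - T)"
    using permutes_inj[OF assms(1)] by (rule image_set_diff)
  ultimately show ?thesis
    using assms(1,3) by (simp add: permutes_image Diff_Diff_Int Int_absorb1)
qed

definition occurs_3142 :: "(nat \<Rightarrow> nat) \<Rightarrow> nat set \<Rightarrow> bool" where
  "occurs_3142 \<sigma> A \<longleftrightarrow> (\<exists>a\<in>A. \<exists>b\<in>A. \<exists>c\<in>A. \<exists>d\<in>A.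
     a < b \<and> b < c \<and> c < d \<and> \<sigma> b < \<sigma> d \<and> \<sigma> d < \<sigma> a \<and> \<sigma> a < \<sigma> c)"

lemma occurs_3142I:
  assumes "a \<in> A" "b \<in> A" "c \<in> A" "d \<in> A" "a < b" "b < c" "c < d"
    and "\<sigma> b < \<sigma> d" "\<sigma> d < \<sigma> a" "\<sigma> a < \<sigma> c"
  shows "occurs_3142 \<sigma> A"
  using assms unfolding occurs_3142_def by blast

lemma occurs_3142E:
  assumes "occurs_3142 \<sigma> A"
  obtains a b c d where "a \<in> A" "b \<in> A" "c \<in> A" "d \<in> A" "a < b" "b < c" "c < d"
    and "\<sigma> b < \<sigma> d" "\<sigma> d < \<sigma> a" "\<sigma> a < \<sigma> c"
  using assms unfolding occurs_3142_def by blast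

lemma contains_pattern_3142_iff: "contains_pattern \<sigma> m [3,1,4,2] \<longleftrightarrow> occurs_3142 \<sigma> {1..m}"
proof
  assume "contains_pattern \<sigma> m [3,1,4,2]"
  moreover have "length [3,1,4,2::nat] = 4"
    by simp
  ultimately obtain idx where range: "\<forall>a<4. idx a \<in> {1..m}"
    and mono: "\<forall>a b. a < b \<and> b < 4 \<longrightarrow> idx a < idx b"
    and order: "\<forall>a<4. \<forall>b<4. \<sigma> (idx a) < \<sigma> (idx b) \<longleftrightarrow> [3,1,4,2::nat] ! a < [3,1,4,2] ! b"
    unfolding contains_pattern_def by metis
  show "occurs_3142 \<sigma> {1..m}"
    using range[rule_format, of 0] range[rule_format, of 1] range[rule_format, of 2] range[rule_format, of 3]
      mono[rule_format, of 0 1] mono[rule_format, of 1 2] mono[rule_format, of 2 3]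
      order[rule_format, of 1 3] order[rule_format, of 3 0] order[rule_format, of 0 2]
    by (intro occurs_3142I[of "idx 0" _ "idx 1" "idx 2" "idx 3"]) auto
next
  assume "occurs_3142 \<sigma> {1..m}"
  then obtain a b c d where abcd: "a \<in> {1..m}" "b \<in> {1..m}" "c \<in> {1..m}" "d \<in> {1..m}"
    "a < b" "b < c" "c < d" "\<sigma> b < \<sigma> d" "\<sigma> d < \<sigma> a" "\<sigma> a < \<sigma> c"
    by (rule occurs_3142E)
  define idx where "idx i = [a,b,c,d] ! i" for i
  have all_less_4: "(\<forall>i<4. P i) \<longleftrightarrow> P 0 \<and> P 1 \<and> P 2 \<and> P (3::nat)" for P
    by (auto simp: less_Suc_eq numeral_eq_Suc)
  have "\<forall>i<4. idx i \<in> {1..m}"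
    using abcd by (simp add: all_less_4 idx_def)
  moreover have "\<forall>i j. i < j \<and> j < 4 \<longrightarrow> idx i < idx j"
  proof (intro allI impI)
    fix i j :: nat assume "i < j \<and> j < 4"
    then have "i = 0 \<and> j \<in> {1,2,3} \<or> i = 1 \<and> j \<in> {2,3} \<or> i = 2 \<and> j = 3"
      by auto
    then show "idx i < idx j"
      using abcd by (auto simp: idx_def)
  qed
  moreover have "\<forall>i<4. \<forall>j<4. \<sigma> (idx i) < \<sigma> (idx j) \<longleftrightarrow> [3,1,4,2::nat] ! i < [3,1,4,2] ! j"
    using abcd by (simp add: all_less_4 idx_def)
  moreover have "length [3,1,4,2::nat] = 4"
    by simp
  ultimately show "contains_pattern \<sigma> m [3,1,4,2]"
    unfolding contains_pattern_def by metis
qed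

lemma occurs_3142_mono:
  assumes "occurs_3142 \<sigma> A" "A \<subseteq> B"
  shows "occurs_3142 \<sigma> B"
proof -
  obtain a b c d where abcd: "a \<in> A" "b \<in> A" "c \<in> A" "d \<in> A" "a < b" "b < c" "c < d"
    "\<sigma> b < \<sigma> d" "\<sigma> d < \<sigma> a" "\<sigma> a < \<sigma> c"
    using assms(1) by (rule occurs_3142E)
  then show ?thesis
    using assms(2) by (intro occurs_3142I[of a _ b c d]) auto
qed

lemma occurs_3142_cong:
  assumes "occurs_3142 \<sigma> A" "\<And>x. x \<in> A \<Longrightarrow> \<sigma> x = \<tau> x"
  shows "occurs_3142 \<tau> A"
proof -
  obtain a b c d where abcd: "a \<in> A" "b \<in> A" "c \<in> A" "d \<in> A" "a < b" "b < c" "c < d"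
    "\<sigma> b < \<sigma> d" "\<sigma> d < \<sigma> a" "\<sigma> a < \<sigma> c"
    using assms(1) by (rule occurs_3142E)
  then show ?thesis
    using assms(2) by (intro occurs_3142I[of a _ b c d]) auto
qed

lemma occurs_3142_reverse_complement:
  assumes "occurs_3142 \<sigma> A" and rc: "\<And>x. x \<in> A \<Longrightarrow> x \<le> N \<and> \<tau> (N - x) + \<sigma> x = C"
  shows "occurs_3142 \<tau> ((\<lambda>x. N - x) ` A)"
proof -
  obtain a b c d where abcd: "a \<in> A" "b \<in> A" "c \<in> A" "d \<in> A" "a < b" "b < c" "c < d"
    "\<sigma> b < \<sigma> d" "\<sigma> d < \<sigma> a" "\<sigma> a < \<sigma> c"
    using assms(1) by (rule occurs_3142E)
  note rc_abcd = rc[OF abcd(1)] rc[OF abcd(2)] rc[OF abcd(3)] rc[OF abcd(4)]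
  show ?thesis
  proof (rule occurs_3142I)
    show "N - d < N - c" "N - c < N - b" "N - b < N - a"
      using abcd(5-7) rc_abcd by linarith+
    show "\<tau> (N - c) < \<tau> (N - a)" "\<tau> (N - a) < \<tau> (N - d)" "\<tau> (N - d) < \<tau> (N - b)"
      using abcd(8-10) rc_abcd by linarith+
  qed (use abcd(1-4) in auto)
qed

lemma occurs_3142_split:
  assumes "occurs_3142 \<sigma> A" and "\<And>x y. x \<in> A \<Longrightarrow> y \<in> A \<Longrightarrow> x \<le> p \<Longrightarrow> p < y \<Longrightarrow> \<sigma> x < \<sigma> y"
  shows "occurs_3142 \<sigma> {x\<in>A. x \<le> p} \<or> occurs_3142 \<sigma> {x\<in>A. p < x}"
proof -
  obtain a b c d where abcd: "a \<in> A" "b \<in> A" "c \<in> A" "d \<in> A" "a < b" "b < c" "c < d"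
    "\<sigma> b < \<sigma> d" "\<sigma> d < \<sigma> a" "\<sigma> a < \<sigma> c"
    using assms(1) by (rule occurs_3142E)
  \<comment> \<open>Since \<open>\<sigma> d < \<sigma> a\<close>, the positions \<open>a\<close> and \<open>d\<close> cannot lie on different sides of \<open>p\<close>.\<close>
  have "d \<le> p \<or> p < a"
  proof (rule ccontr)
    assume "\<not> (d \<le> p \<or> p < a)"
    then have "\<sigma> a < \<sigma> d"
      using assms(2)[of a d] abcd(1,4) by simp
    then show False
      using abcd(9) by simp
  qed
  then show ?thesis
  proof
    assume "d \<le> p"
    then have "occurs_3142 \<sigma> {x\<in>A. x \<le> p}"
      by (intro occurs_3142I[of a _ b c d]) (use abcd in auto)
    then show ?thesis ..
  next
    assume "p < a"
    then have "occurs_3142 \<sigma> {x\<in>A. p < x}"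
      by (intro occurs_3142I[of a _ b c d]) (use abcd in auto)
    then show ?thesis ..
  qed
qed

lemma occurs_3142_remove_first:
  assumes "occurs_3142 \<sigma> A" and "\<And>y. y \<in> A \<Longrightarrow> x \<le> y"
    and "(\<forall>y\<in>A. \<sigma> y \<le> \<sigma> x) \<or> (\<forall>y\<in>A. \<sigma> x \<le> \<sigma> y)"
  shows "occurs_3142 \<sigma> (A - {x})"
proof -
  obtain a b c d where abcd: "a \<in> A" "b \<in> A" "c \<in> A" "d \<in> A" "a < b" "b < c" "c < d"
    "\<sigma> b < \<sigma> d" "\<sigma> d < \<sigma> a" "\<sigma> a < \<sigma> c"
    using assms(1) by (rule occurs_3142E)
  \<comment> \<open>Only the first position \<open>a\<close> can be \<open>x\<close>, but its value is neither the maximum nor the minimum.\<close>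
  have "a \<noteq> x"
    using assms(3) abcd by force
  moreover have "b \<noteq> x" "c \<noteq> x" "d \<noteq> x"
    using assms(2)[of a] abcd by auto
  ultimately show ?thesis
    by (intro occurs_3142I[of a _ b c d]) (use abcd in auto)
qed

section \<open>Dumont permutations of the second kind\<close>

lemma dumont2_iff:
  "\<pi> \<in> dumont2 n \<longleftrightarrow> \<pi> permutes {1..2*n} \<and> (\<forall>i\<in>{1..2*n}. \<pi> i < i \<longleftrightarrow> even i)"
proof -
  have "(\<forall>j\<in>{1..n}. \<pi> (2*j) < 2*j \<and> 2*j - 1 \<le> \<pi> (2*j - 1)) \<longleftrightarrow> (\<forall>i\<in>{1..2*n}. \<pi> i < i \<longleftrightarrow> even i)"
  proof
    assume pairs: "\<forall>j\<in>{1..n}. \<pi> (2*j) < 2*j \<and> 2*j - 1 \<le> \<pi> (2*j - 1)"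
    show "\<forall>i\<in>{1..2*n}. \<pi> i < i \<longleftrightarrow> even i"
    proof
      fix i assume i: "i \<in> {1..2*n}"
      define j where "j = (i + 1) div 2"
      have "j \<in> {1..n}"
        using i by (auto simp: j_def)
      moreover have "i = (if even i then 2*j else 2*j - 1)"
        unfolding j_def by presburger
      ultimately show "\<pi> i < i \<longleftrightarrow> even i"
        using pairs by (metis not_le)
    qed
  next
    assume parity: "\<forall>i\<in>{1..2*n}. \<pi> i < i \<longleftrightarrow> even i"
    show "\<forall>j\<in>{1..n}. \<pi> (2*j) < 2*j \<and> 2*j - 1 \<le> \<pi> (2*j - 1)"
    proof
      fix j assume j: "j \<in> {1..n}"
      then have "2*j \<in> {1..2*n}" "2*j - 1 \<in> {1..2*n}" "odd (2*j - 1)"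
        by auto
      then show "\<pi> (2*j) < 2*j \<and> 2*j - 1 \<le> \<pi> (2*j - 1)"
        using parity by (simp add: not_less[symmetric])
    qed
  qed
  then show ?thesis
    unfolding dumont2_def by blast
qed

lemma dumont2_permutes: "\<pi> \<in> dumont2 n \<Longrightarrow> \<pi> permutes {1..2*n}"
  unfolding dumont2_iff by blast

lemma dumont2_parity: "\<pi> \<in> dumont2 n \<Longrightarrow> i \<in> {1..2*n} \<Longrightarrow> \<pi> i < i \<longleftrightarrow> even i"
  unfolding dumont2_iff by blast

lemma dumont2_in_range:
  assumes "\<pi> \<in> dumont2 n" "i \<in> {1..2*n}"
  shows "\<pi> i \<in> {1..2*n}"
  using assms(2) by (simp only: permutes_in_image[OF dumont2_permutes[OF assms(1)]])

definition dumont2_3142 :: "nat \<Rightarrow> (nat \<Rightarrow> nat) set" where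
  "dumont2_3142 n = dumont2_av n {[3,1,4,2]}"

lemma dumont2_3142_iff:
  "\<pi> \<in> dumont2_3142 n \<longleftrightarrow> \<pi> \<in> dumont2 n \<and> \<not> occurs_3142 \<pi> {1..2*n}"
  using contains_pattern_3142_iff[simplified] by (simp add: dumont2_3142_def dumont2_av_def avoids_def)

lemma dumont2_3142I:
  assumes "\<pi> permutes {1..2*n}" "\<And>i. i \<in> {1..2*n} \<Longrightarrow> \<pi> i < i \<longleftrightarrow> even i"
    and "\<not> occurs_3142 \<pi> {1..2*n}"
  shows "\<pi> \<in> dumont2_3142 n"
  using assms unfolding dumont2_3142_iff dumont2_iff by auto

lemma dumont2_3142_dumont2: "\<pi> \<in> dumont2_3142 n \<Longrightarrow> \<pi> \<in> dumont2 n"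
  unfolding dumont2_3142_iff by blast

lemma dumont2_3142_permutes: "\<pi> \<in> dumont2_3142 n \<Longrightarrow> \<pi> permutes {1..2*n}"
  by (intro dumont2_permutes dumont2_3142_dumont2)

lemma dumont2_3142_avoids: "\<pi> \<in> dumont2_3142 n \<Longrightarrow> \<not> occurs_3142 \<pi> {1..2*n}"
  unfolding dumont2_3142_iff by blast

section \<open>Gluing\<close>

definition glue :: "nat \<Rightarrow> nat \<Rightarrow> (nat \<Rightarrow> nat) \<Rightarrow> (nat \<Rightarrow> nat) \<Rightarrow> nat \<Rightarrow> nat" where
  "glue n k \<alpha> \<beta> i =
     (if i \<in> {1..2*k} then \<alpha> i
      else if i = 2*k+1 then 2*n+2
      else if i = 2*k+2 then 2*k+1
      else if i \<in> {2*k+3..2*n+2} then 2*n+2 - \<beta> (2*n+3-i)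
      else i)"

definition left_part :: "nat \<Rightarrow> (nat \<Rightarrow> nat) \<Rightarrow> nat \<Rightarrow> nat" where
  "left_part k \<pi> = restrict_id \<pi> {1..2*k}"

definition right_part :: "nat \<Rightarrow> nat \<Rightarrow> (nat \<Rightarrow> nat) \<Rightarrow> nat \<Rightarrow> nat" where
  "right_part n k \<pi> = restrict_id (\<lambda>j. 2*n+2 - \<pi> (2*n+3-j)) {1..2*(n-k)}"

lemma glue_simps:
  "i \<in> {1..2*k} \<Longrightarrow> glue n k \<alpha> \<beta> i = \<alpha> i"
  "i = 2*k+1 \<Longrightarrow> glue n k \<alpha> \<beta> i = 2*n+2"
  "i = 2*k+2 \<Longrightarrow> glue n k \<alpha> \<beta> i = 2*k+1"
  "i \<in> {2*k+3..2*n+2} \<Longrightarrow> glue n k \<alpha> \<beta> i = 2*n+2 - \<beta> (2*n+3-i)"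
  "k \<le> n \<Longrightarrow> i \<notin> {1..2*Suc n} \<Longrightarrow> glue n k \<alpha> \<beta> i = i"
  by (auto simp: glue_def)

lemma glue_right_block:
  assumes "k \<le> n" "\<beta> permutes {1..2*(n-k)}" "i \<in> {2*k+3..2*n+2}"
  shows "glue n k \<alpha> \<beta> i \<in> {2*k+2..2*n+1}" "\<beta> (2*n+3-i) + glue n k \<alpha> \<beta> i = 2*n+2"
proof -
  have "\<beta> (2*n+3-i) \<in> {1..2*(n-k)}"
    using assms by (simp only: permutes_in_image) auto
  then show "glue n k \<alpha> \<beta> i \<in> {2*k+2..2*n+1}" "\<beta> (2*n+3-i) + glue n k \<alpha> \<beta> i = 2*n+2"
    using assms(1,3) by (auto simp: glue_simps(4))
qed

lemma glue_permutes:
  assumes k: "k \<le> n" and \<alpha>: "\<alpha> permutes {1..2*k}" and \<beta>: "\<beta> permutes {1..2*(n-k)}"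
  shows "glue n k \<alpha> \<beta> permutes {1..2*Suc n}"
proof (rule bij_imp_permutes)
  let ?g = "glue n k \<alpha> \<beta>"
  have "bij_betw \<alpha> {1..2*k} {1..2*k}"
    using \<alpha> by (rule permutes_imp_bij)
  then have left: "bij_betw ?g {1..2*k} {1..2*k}"
    by (rule bij_betw_cong[THEN iffD1, rotated]) (simp add: glue_simps(1))
  have "bij_betw (\<lambda>i. 2*n+2 - \<beta> (2*n+3-i)) {2*n+3 - 2*(n-k)..2*n+3 - 1} {2*n+2 - 2*(n-k)..2*n+2 - 1}"
    using permutes_imp_bij[OF \<beta>] by (rule bij_betw_reverse_complement) auto
  moreover have "2*n+3 - 2*(n-k) = 2*k+3" "2*n+2 - 2*(n-k) = 2*k+2"
    using k by auto
  ultimately have "bij_betw (\<lambda>i. 2*n+2 - \<beta> (2*n+3-i)) {2*k+3..2*n+2} {2*k+2..2*n+1}"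
    by simp
  then have right: "bij_betw ?g {2*k+3..2*n+2} {2*k+2..2*n+1}"
    by (rule bij_betw_cong[THEN iffD1, rotated]) (simp add: glue_simps(4))
  have middle: "bij_betw ?g {2*k+1} {2*n+2}" "bij_betw ?g {2*k+2} {2*k+1}"
    by (simp_all add: glue_simps(2,3))
  have "bij_betw ?g ({1..2*k} \<union> {2*k+1} \<union> {2*k+2} \<union> {2*k+3..2*n+2})
                    ({1..2*k} \<union> {2*n+2} \<union> {2*k+1} \<union> {2*k+2..2*n+1})"
    by (intro bij_betw_combine left right middle) (use k in auto)
  moreover have "{1..2*k} \<union> {2*k+1} \<union> {2*k+2} \<union> {2*k+3..2*n+2} = {1..2*Suc n}"
    "{1..2*k} \<union> {2*n+2} \<union> {2*k+1} \<union> {2*k+2..2*n+1} = {1..2*Suc n}"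
    using k by auto
  ultimately show "bij_betw ?g {1..2*Suc n} {1..2*Suc n}"
    by simp
  show "?g i = i" if "i \<notin> {1..2*Suc n}" for i
    using that k by (auto simp: glue_simps(5))
qed

lemma glue_parity:
  assumes k: "k \<le> n" and \<alpha>: "\<alpha> \<in> dumont2 k" and \<beta>: "\<beta> \<in> dumont2 (n-k)"
    and i: "i \<in> {1..2*Suc n}"
  shows "glue n k \<alpha> \<beta> i < i \<longleftrightarrow> even i"
proof -
  consider "i \<in> {1..2*k}" | "i = 2*k+1" | "i = 2*k+2" | "i \<in> {2*k+3..2*n+2}"
    using i by fastforce
  then show ?thesis
  proof cases
    case 1
    then show ?thesis
      using dumont2_parity[OF \<alpha>] by (simp add: glue_simps(1))
  next
    case 4
    define j where "j = 2*n+3 - i"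
    have j: "j \<in> {1..2*(n-k)}" "i = 2*n+3 - j"
      using 4 k by (auto simp: j_def)
    have "\<beta> j \<in> {1..2*(n-k)}" and "\<beta> j < j \<longleftrightarrow> even j"
      using \<beta> j(1) by (rule dumont2_in_range, rule dumont2_parity)
    moreover have "even i \<longleftrightarrow> odd j"
      using j(2) 4 by auto
    ultimately show ?thesis
      using 4 j k by (auto simp: glue_simps(4))
  qed (use k in \<open>simp_all add: glue_simps(2,3)\<close>)
qed

lemma occurs_3142_glue_right:
  assumes k: "k \<le> n" and \<beta>: "\<beta> permutes {1..2*(n-k)}"
    and occ: "occurs_3142 (glue n k \<alpha> \<beta>) {2*k+1..2*n+2}"
  shows "occurs_3142 \<beta> {1..2*(n-k)}"
proof -
  let ?g = "glue n k \<alpha> \<beta>"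
  have right: "?g i \<in> {2*k+2..2*n+1}" if "i \<in> {2*k+3..2*n+2}" for i
    using k \<beta> that by (rule glue_right_block)
  \<comment> \<open>The block starts with its maximum \<open>2n + 2\<close> and then its minimum \<open>2k + 1\<close>; neither can
    take part in an occurrence.\<close>
  have "\<forall>y\<in>{2*k+1..2*n+2}. ?g y \<le> ?g (2*k+1)"
  proof
    fix y assume "y \<in> {2*k+1..2*n+2}"
    then consider "y = 2*k+1" | "y = 2*k+2" | "y \<in> {2*k+3..2*n+2}"
      by force
    then show "?g y \<le> ?g (2*k+1)"
      using right[of y] k by cases (simp_all add: glue_simps(2,3))
  qed
  with occ have "occurs_3142 ?g ({2*k+1..2*n+2} - {2*k+1})"
    by (intro occurs_3142_remove_first) auto
  then have "occurs_3142 ?g {2*k+2..2*n+2}"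
    by (rule occurs_3142_mono) auto
  moreover have "\<forall>y\<in>{2*k+2..2*n+2}. ?g (2*k+2) \<le> ?g y"
  proof
    fix y assume "y \<in> {2*k+2..2*n+2}"
    then consider "y = 2*k+2" | "y \<in> {2*k+3..2*n+2}"
      by force
    then show "?g (2*k+2) \<le> ?g y"
      using right[of y] by cases (simp_all add: glue_simps(3))
  qed
  ultimately have "occurs_3142 ?g ({2*k+2..2*n+2} - {2*k+2})"
    by (intro occurs_3142_remove_first) auto
  then have "occurs_3142 \<beta> ((\<lambda>i. 2*n+3 - i) ` ({2*k+2..2*n+2} - {2*k+2}))"
  proof (rule occurs_3142_reverse_complement)
    fix x assume "x \<in> {2*k+2..2*n+2} - {2*k+2}"
    then have "x \<in> {2*k+3..2*n+2}"
      by auto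
    then show "x \<le> 2*n+3 \<and> \<beta> (2*n+3-x) + ?g x = 2*n+2"
      using glue_right_block(2)[OF k \<beta>] by auto
  qed
  then show ?thesis
    by (rule occurs_3142_mono) (use k in auto)
qed

lemma glue_avoids_3142:
  assumes k: "k \<le> n" and \<alpha>: "\<alpha> \<in> dumont2_3142 k" and \<beta>: "\<beta> \<in> dumont2_3142 (n-k)"
  shows "\<not> occurs_3142 (glue n k \<alpha> \<beta>) {1..2*Suc n}"
proof
  let ?g = "glue n k \<alpha> \<beta>"
  have left: "?g i \<le> 2*k" if "i \<in> {1..2*k}" for i
    using dumont2_in_range[OF dumont2_3142_dumont2[OF \<alpha>] that] that by (simp add: glue_simps(1))
  have right: "?g i \<in> {2*k+2..2*n+1}" if "i \<in> {2*k+3..2*n+2}" for i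
    using k dumont2_3142_permutes[OF \<beta>] that by (rule glue_right_block)
  assume "occurs_3142 ?g {1..2*Suc n}"
  \<comment> \<open>Positions up to \<open>2k\<close> carry exactly the values up to \<open>2k\<close>, so an occurrence lies on one side.\<close>
  then have "occurs_3142 ?g {i\<in>{1..2*Suc n}. i \<le> 2*k} \<or> occurs_3142 ?g {i\<in>{1..2*Suc n}. 2*k < i}"
  proof (rule occurs_3142_split)
    fix x y assume xy: "x \<in> {1..2*Suc n}" "y \<in> {1..2*Suc n}" "x \<le> 2*k" "2*k < y"
    then consider "y = 2*k+1" | "y = 2*k+2" | "y \<in> {2*k+3..2*n+2}"
      by force
    then show "?g x < ?g y"
      using left[of x] right[of y] xy k by cases (auto simp: glue_simps(2,3))
  qed
  then show False
  proof
    assume "occurs_3142 ?g {i\<in>{1..2*Suc n}. i \<le> 2*k}"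
    then have "occurs_3142 ?g {1..2*k}"
      by (rule occurs_3142_mono) auto
    then have "occurs_3142 \<alpha> {1..2*k}"
      by (rule occurs_3142_cong) (simp add: glue_simps(1))
    then show False
      using dumont2_3142_avoids[OF \<alpha>] by contradiction
  next
    assume "occurs_3142 ?g {i\<in>{1..2*Suc n}. 2*k < i}"
    then have "occurs_3142 ?g {2*k+1..2*n+2}"
      by (rule occurs_3142_mono) auto
    then have "occurs_3142 \<beta> {1..2*(n-k)}"
      using k dumont2_3142_permutes[OF \<beta>] by (intro occurs_3142_glue_right)
    then show False
      using dumont2_3142_avoids[OF \<beta>] by contradiction
  qed
qed

lemma glue_mem:
  assumes "k \<le> n" "\<alpha> \<in> dumont2_3142 k" "\<beta> \<in> dumont2_3142 (n-k)"
  shows "glue n k \<alpha> \<beta> \<in> dumont2_3142 (Suc n)"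
proof (rule dumont2_3142I)
  show "glue n k \<alpha> \<beta> permutes {1..2*Suc n}"
    using assms by (intro glue_permutes dumont2_3142_permutes)
  show "glue n k \<alpha> \<beta> i < i \<longleftrightarrow> even i" if "i \<in> {1..2*Suc n}" for i
    using assms that by (intro glue_parity dumont2_3142_dumont2)
  show "\<not> occurs_3142 (glue n k \<alpha> \<beta>) {1..2*Suc n}"
    using assms by (rule glue_avoids_3142)
qed

lemma left_part_glue:
  assumes "\<alpha> permutes {1..2*k}"
  shows "left_part k (glue n k \<alpha> \<beta>) = \<alpha>"
  using permutes_not_in[OF assms] by (auto simp: left_part_def restrict_id_def glue_def)

lemma right_part_glue:
  assumes "k \<le> n" "\<beta> permutes {1..2*(n-k)}"
  shows "right_part n k (glue n k \<alpha> \<beta>) = \<beta>"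
proof
  fix j
  show "right_part n k (glue n k \<alpha> \<beta>) j = \<beta> j"
  proof (cases "j \<in> {1..2*(n-k)}")
    case True
    then have "\<beta> j \<in> {1..2*(n-k)}"
      using assms(2) by (simp only: permutes_in_image)
    with True assms(1) show ?thesis
      by (auto simp: right_part_def glue_def)
  qed (use permutes_not_in[OF assms(2)] in \<open>simp add: right_part_def\<close>)
qed

section \<open>Splitting at the maximum\<close>

lemma dumont2_max_position:
  assumes "\<pi> \<in> dumont2 (Suc n)"
  obtains k where "k \<le> n" "\<pi> (2*k+1) = 2*n+2"
proof -
  have "2*n+2 \<in> \<pi> ` {1..2*Suc n}"
    using permutes_image[OF dumont2_permutes[OF assms]] by simp
  then obtain p where p: "p \<in> {1..2*Suc n}" "\<pi> p = 2*n+2"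
    by (metis imageE)
  \<comment> \<open>At an even position \<open>p\<close> we would have \<open>\<pi> p < p \<le> 2n + 2\<close>.\<close>
  have "odd p"
    using dumont2_parity[OF assms p(1)] p by auto
  then have "p = 2*(p div 2) + 1" "p div 2 \<le> n"
    using p(1) by auto presburger
  with p(2) show ?thesis
    using that by metis
qed

lemma dumont2_3142_before_max:
  assumes \<pi>: "\<pi> \<in> dumont2_3142 (Suc n)" and k: "k \<le> n" and max: "\<pi> (2*k+1) = 2*n+2"
    and j: "j \<in> {2*k+2..2*n+2}" and i: "1 \<le> i" "i < e" "e \<le> 2*k" and e: "\<pi> e < \<pi> j"
  shows "\<pi> i < \<pi> j"
proof (rule ccontr)
  have D: "\<pi> \<in> dumont2 (Suc n)"
    using \<pi> by (rule dumont2_3142_dumont2)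
  have inj: "inj \<pi>"
    using permutes_inj[OF dumont2_permutes[OF D]] .
  have "i \<noteq> j" "i \<noteq> 2*k+1"
    using i j by simp_all
  then have "\<pi> i \<noteq> \<pi> j" "\<pi> i \<noteq> 2*n+2"
    using inj max by (metis injD)+
  assume "\<not> \<pi> i < \<pi> j"
  then have "\<pi> j < \<pi> i"
    using \<open>\<pi> i \<noteq> \<pi> j\<close> by simp
  moreover have "\<pi> i < 2*n+2"
    using dumont2_in_range[OF D, of i] \<open>\<pi> i \<noteq> 2*n+2\<close> i k by auto
  \<comment> \<open>The maximum at \<open>2k + 1\<close> plays the 4.\<close>
  ultimately have "occurs_3142 \<pi> {1..2*Suc n}"
    using e i j k max by (intro occurs_3142I[of i _ e "2*k+1" j]) auto
  then show False
    using dumont2_3142_avoids[OF \<pi>] by contradiction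
qed

lemma dumont2_3142_right_of_max:
  assumes \<pi>: "\<pi> \<in> dumont2_3142 (Suc n)" and k: "k \<le> n" and max: "\<pi> (2*k+1) = 2*n+2"
    and j: "j \<in> {2*k+2..2*n+2}"
  shows "2*k < \<pi> j"
proof (rule ccontr)
  have D: "\<pi> \<in> dumont2 (Suc n)"
    using \<pi> by (rule dumont2_3142_dumont2)
  have inj: "inj \<pi>"
    using permutes_inj[OF dumont2_permutes[OF D]] .
  define v where "v = \<pi> j"
  assume "\<not> 2*k < \<pi> j"
  then have v: "v \<in> {1..2*k}"
    using dumont2_in_range[OF D, of j] j by (auto simp: v_def)
  \<comment> \<open>The even position \<open>e \<in> {v, v + 1}\<close> carries a value below \<open>v\<close>, hence so do all positions
    up to \<open>e\<close>: \<open>e\<close> distinct values below \<open>v \<le> e\<close>, which is absurd.\<close>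
  define e where "e = (if even v then v else v + 1)"
  have e: "even e" "v \<le> e" "e \<le> v + 1" "e \<in> {1..2*k}"
    using v by (auto simp: e_def) presburger
  have "e \<noteq> j"
    using e(4) j by auto
  then have "\<pi> e \<noteq> v"
    using inj unfolding v_def by (metis injD)
  moreover have "\<pi> e < e"
    using dumont2_parity[OF D, of e] e k by auto
  ultimately have "\<pi> e < v"
    using e(2,3) by linarith
  have "\<pi> ` {1..e} \<subseteq> {1..v-1}"
  proof (rule image_subsetI)
    fix i assume i: "i \<in> {1..e}"
    then have "\<pi> i < v"
      using dumont2_3142_before_max[OF \<pi> k max j, of i e] \<open>\<pi> e < v\<close> e(4)
      unfolding v_def by (cases "i = e") auto
    moreover have "\<pi> i \<in> {1..2*Suc n}"
      using i e(4) k by (intro dumont2_in_range[OF D]) auto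
    ultimately show "\<pi> i \<in> {1..v-1}"
      by auto
  qed
  then have "card {1..e} \<le> card {1..v-1}"
    using inj by (intro card_inj_on_le) (auto intro: inj_on_subset)
  then show False
    using e(2) v by simp linarith
qed

lemma dumont2_3142_blocks:
  assumes \<pi>: "\<pi> \<in> dumont2_3142 (Suc n)" and k: "k \<le> n" and max: "\<pi> (2*k+1) = 2*n+2"
  shows "\<pi> ` {1..2*k} = {1..2*k}" "\<pi> (2*k+2) = 2*k+1" "\<pi> ` {2*k+3..2*n+2} = {2*k+2..2*n+1}"
proof -
  have D: "\<pi> \<in> dumont2 (Suc n)"
    using \<pi> by (rule dumont2_3142_dumont2)
  have perm: "\<pi> permutes {1..2*Suc n}"
    using D by (rule dumont2_permutes)
  have right: "2*k < \<pi> j" if "j \<in> {2*k+2..2*n+2}" for j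
    using \<pi> k max that by (rule dumont2_3142_right_of_max)
  have "\<pi> ` ({1..2*Suc n} - {1..2*k}) \<subseteq> {1..2*Suc n} - {1..2*k}"
  proof (rule image_subsetI)
    fix i assume i: "i \<in> {1..2*Suc n} - {1..2*k}"
    then have "2*k < \<pi> i"
      using right[of i] max by (cases "i = 2*k+1") auto
    then show "\<pi> i \<in> {1..2*Suc n} - {1..2*k}"
      using dumont2_in_range[OF D, of i] i by auto
  qed
  then show left: "\<pi> ` {1..2*k} = {1..2*k}"
    using perm k by (intro permutes_image_eq_if_complement_stable) auto
  have "\<pi> (2*k+2) < 2*k+2"
    using dumont2_parity[OF D, of "2*k+2"] k by simp
  then show min: "\<pi> (2*k+2) = 2*k+1"
    using right[of "2*k+2"] k by simp
  have "{2*k+3..2*n+2} = {1..2*Suc n} - ({1..2*k} \<union> {2*k+1, 2*k+2})"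
    using k by auto
  then have "\<pi> ` {2*k+3..2*n+2} = \<pi> ` {1..2*Suc n} - \<pi> ` ({1..2*k} \<union> {2*k+1, 2*k+2})"
    by (simp add: image_set_diff[OF permutes_inj[OF perm]])
  also have "\<dots> = {1..2*Suc n} - ({1..2*k} \<union> {2*n+2, 2*k+1})"
    by (simp only: permutes_image[OF perm] image_Un image_insert image_empty left max min)
  also have "\<dots> = {2*k+2..2*n+1}"
    using k by auto
  finally show "\<pi> ` {2*k+3..2*n+2} = {2*k+2..2*n+1}" .
qed

lemma left_part_mem:
  assumes \<pi>: "\<pi> \<in> dumont2_3142 (Suc n)" and k: "k \<le> n" and left: "\<pi> ` {1..2*k} = {1..2*k}"
  shows "left_part k \<pi> \<in> dumont2_3142 k"
proof (rule dumont2_3142I)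
  have D: "\<pi> \<in> dumont2 (Suc n)"
    using \<pi> by (rule dumont2_3142_dumont2)
  have agree: "left_part k \<pi> i = \<pi> i" if "i \<in> {1..2*k}" for i
    using that by (simp add: left_part_def)
  have "bij_betw \<pi> {1..2*k} {1..2*k}"
    by (rule bij_betw_subset[OF permutes_imp_bij[OF dumont2_permutes[OF D]] _ left]) (use k in auto)
  then show "left_part k \<pi> permutes {1..2*k}"
    unfolding left_part_def by (rule permutes_restrict_id)
  show "left_part k \<pi> i < i \<longleftrightarrow> even i" if "i \<in> {1..2*k}" for i
    using dumont2_parity[OF D, of i] that k by (simp add: agree)
  show "\<not> occurs_3142 (left_part k \<pi>) {1..2*k}"
  proof
    assume "occurs_3142 (left_part k \<pi>) {1..2*k}"
    then have "occurs_3142 \<pi> {1..2*k}"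
      by (rule occurs_3142_cong) (simp add: agree)
    then have "occurs_3142 \<pi> {1..2*Suc n}"
      by (rule occurs_3142_mono) (use k in auto)
    then show False
      using dumont2_3142_avoids[OF \<pi>] by contradiction
  qed
qed

lemma right_part_mem:
  assumes \<pi>: "\<pi> \<in> dumont2_3142 (Suc n)" and k: "k \<le> n"
    and right: "\<pi> ` {2*k+3..2*n+2} = {2*k+2..2*n+1}"
  shows "right_part n k \<pi> \<in> dumont2_3142 (n-k)"
proof (rule dumont2_3142I)
  have D: "\<pi> \<in> dumont2 (Suc n)"
    using \<pi> by (rule dumont2_3142_dumont2)
  have agree: "right_part n k \<pi> j = 2*n+2 - \<pi> (2*n+3-j)" if "j \<in> {1..2*(n-k)}" for j
    using that by (simp add: right_part_def)
  have "bij_betw \<pi> {2*k+3..2*n+2} {2*k+2..2*n+1}"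
    by (rule bij_betw_subset[OF permutes_imp_bij[OF dumont2_permutes[OF D]] _ right]) auto
  then have "bij_betw (\<lambda>j. 2*n+2 - \<pi> (2*n+3-j))
      {2*n+3 - (2*n+2)..2*n+3 - (2*k+3)} {2*n+2 - (2*n+1)..2*n+2 - (2*k+2)}"
    by (rule bij_betw_reverse_complement) (use k in auto)
  moreover have "2*n+3 - (2*k+3) = 2*(n-k)" "2*n+2 - (2*k+2) = 2*(n-k)"
    by auto
  ultimately have "bij_betw (\<lambda>j. 2*n+2 - \<pi> (2*n+3-j)) {1..2*(n-k)} {1..2*(n-k)}"
    by simp
  then show "right_part n k \<pi> permutes {1..2*(n-k)}"
    unfolding right_part_def by (rule permutes_restrict_id)
  have block_values: "\<pi> (2*n+3-j) \<in> {2*k+2..2*n+1}" if "j \<in> {1..2*(n-k)}" for j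
  proof -
    have "2*n+3-j \<in> {2*k+3..2*n+2}"
      using that k by auto
    then have "\<pi> (2*n+3-j) \<in> \<pi> ` {2*k+3..2*n+2}"
      by (rule imageI)
    then show ?thesis
      by (simp only: right)
  qed
  show "right_part n k \<pi> j < j \<longleftrightarrow> even j" if j: "j \<in> {1..2*(n-k)}" for j
  proof -
    have "2*n+3-j \<in> {1..2*Suc n}"
      using j k by auto
    then have "\<pi> (2*n+3-j) < 2*n+3-j \<longleftrightarrow> even (2*n+3-j)"
      by (rule dumont2_parity[OF D])
    moreover have "even (2*n+3-j) \<longleftrightarrow> odd j"
      using j k by auto
    ultimately show ?thesis
      using block_values[OF j] j by (auto simp: agree)
  qed
  show "\<not> occurs_3142 (right_part n k \<pi>) {1..2*(n-k)}"
  proof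
    assume "occurs_3142 (right_part n k \<pi>) {1..2*(n-k)}"
    then have "occurs_3142 \<pi> ((\<lambda>j. 2*n+3 - j) ` {1..2*(n-k)})"
    proof (rule occurs_3142_reverse_complement)
      fix j assume j: "j \<in> {1..2*(n-k)}"
      then show "j \<le> 2*n+3 \<and> \<pi> (2*n+3-j) + right_part n k \<pi> j = 2*n+2"
        using block_values[OF j] by (auto simp: agree)
    qed
    then have "occurs_3142 \<pi> {1..2*Suc n}"
      by (rule occurs_3142_mono) auto
    then show False
      using dumont2_3142_avoids[OF \<pi>] by contradiction
  qed
qed

lemma glue_left_right_part:
  assumes perm: "\<pi> permutes {1..2*Suc n}" and k: "k \<le> n"
    and max: "\<pi> (2*k+1) = 2*n+2" and min: "\<pi> (2*k+2) = 2*k+1"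
    and right: "\<pi> ` {2*k+3..2*n+2} = {2*k+2..2*n+1}"
  shows "glue n k (left_part k \<pi>) (right_part n k \<pi>) = \<pi>"
proof
  fix i
  consider "i \<in> {1..2*k}" | "i = 2*k+1" | "i = 2*k+2" | "i \<in> {2*k+3..2*n+2}" | "i \<notin> {1..2*Suc n}"
    by fastforce
  then show "glue n k (left_part k \<pi>) (right_part n k \<pi>) i = \<pi> i"
  proof cases
    case 4
    have "\<pi> i \<in> {2*k+2..2*n+1}"
      using imageI[OF 4, of \<pi>] unfolding right .
    moreover have "2*n+3-i \<in> {1..2*(n-k)}" "2*n+3 - (2*n+3-i) = i"
      using 4 k by auto
    ultimately show ?thesis
      using 4 by (simp add: glue_simps(4) right_part_def)
  next
    case 5
    then show ?thesis
      using k permutes_not_in[OF perm] by (simp add: glue_simps(5))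
  qed (use max min in \<open>simp_all add: glue_simps(1-3) left_part_def\<close>)
qed

lemma dumont2_3142_Suc_decompose:
  assumes \<pi>: "\<pi> \<in> dumont2_3142 (Suc n)"
  obtains k where "k \<le> n" "left_part k \<pi> \<in> dumont2_3142 k" "right_part n k \<pi> \<in> dumont2_3142 (n-k)"
    "\<pi> = glue n k (left_part k \<pi>) (right_part n k \<pi>)"
proof -
  obtain k where k: "k \<le> n" and max: "\<pi> (2*k+1) = 2*n+2"
    using dumont2_max_position[OF dumont2_3142_dumont2[OF \<pi>]] .
  note blocks = dumont2_3142_blocks[OF \<pi> k max]
  show thesis
  proof (rule that[OF k])
    show "left_part k \<pi> \<in> dumont2_3142 k"
      using \<pi> k blocks(1) by (rule left_part_mem)
    show "right_part n k \<pi> \<in> dumont2_3142 (n-k)"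
      using \<pi> k blocks(3) by (rule right_part_mem)
    show "\<pi> = glue n k (left_part k \<pi>) (right_part n k \<pi>)"
      using dumont2_permutes[OF dumont2_3142_dumont2[OF \<pi>]] k max blocks(2,3)
      by (rule glue_left_right_part[symmetric])
  qed
qed

lemma glue_inj:
  "inj_on (\<lambda>(k, \<alpha>, \<beta>). glue n k \<alpha> \<beta>) (SIGMA k:{..n}. dumont2_3142 k \<times> dumont2_3142 (n-k))"
proof (rule inj_onI, clarsimp)
  fix k k' \<alpha> \<alpha>' \<beta> \<beta>'
  assume k: "k \<le> n" "\<alpha> \<in> dumont2_3142 k" "\<beta> \<in> dumont2_3142 (n-k)"
    and k': "k' \<le> n" "\<alpha>' \<in> dumont2_3142 k'" "\<beta>' \<in> dumont2_3142 (n-k')"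
    and eq: "glue n k \<alpha> \<beta> = glue n k' \<alpha>' \<beta>'"
  \<comment> \<open>\<open>k\<close> is recovered from the position \<open>2k + 1\<close> of the maximum.\<close>
  have "glue n k \<alpha> \<beta> (2*k+1) = 2*n+2"
    by (simp add: glue_simps(2))
  moreover have "glue n k \<alpha> \<beta> (2*k'+1) = 2*n+2"
    using eq by (simp add: glue_simps(2))
  moreover have "inj (glue n k \<alpha> \<beta>)"
    using permutes_inj[OF dumont2_permutes[OF dumont2_3142_dumont2[OF glue_mem[OF k]]]] .
  ultimately have "2*k+1 = 2*k'+1"
    by (metis injD)
  then have "k = k'"
    by simp
  have perms: "\<alpha> permutes {1..2*k}" "\<beta> permutes {1..2*(n-k)}"
    "\<alpha>' permutes {1..2*k}" "\<beta>' permutes {1..2*(n-k)}"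
    using dumont2_3142_permutes[OF k(2)] dumont2_3142_permutes[OF k(3)]
      dumont2_3142_permutes[OF k'(2)] dumont2_3142_permutes[OF k'(3)] \<open>k = k'\<close> by simp_all
  have "\<alpha> = \<alpha>'"
    using left_part_glue[OF perms(1)] left_part_glue[OF perms(3)] eq \<open>k = k'\<close> by metis
  moreover have "\<beta> = \<beta>'"
    using right_part_glue[OF k(1) perms(2)] right_part_glue[OF k(1) perms(4)] eq \<open>k = k'\<close> by metis
  moreover note \<open>k = k'\<close>
  ultimately show "k = k' \<and> \<alpha> = \<alpha>' \<and> \<beta> = \<beta>'"
    by blast
qed

lemma dumont2_3142_Suc:
  "dumont2_3142 (Suc n) = (\<lambda>(k, \<alpha>, \<beta>). glue n k \<alpha> \<beta>) ` (SIGMA k:{..n}. dumont2_3142 k \<times> dumont2_3142 (n-k))"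
proof
  show "dumont2_3142 (Suc n) \<subseteq> (\<lambda>(k, \<alpha>, \<beta>). glue n k \<alpha> \<beta>) ` (SIGMA k:{..n}. dumont2_3142 k \<times> dumont2_3142 (n-k))"
  proof
    fix \<pi> assume "\<pi> \<in> dumont2_3142 (Suc n)"
    then obtain k where "k \<le> n" "left_part k \<pi> \<in> dumont2_3142 k" "right_part n k \<pi> \<in> dumont2_3142 (n-k)"
      "\<pi> = glue n k (left_part k \<pi>) (right_part n k \<pi>)"
      by (rule dumont2_3142_Suc_decompose)
    then show "\<pi> \<in> (\<lambda>(k, \<alpha>, \<beta>). glue n k \<alpha> \<beta>) ` (SIGMA k:{..n}. dumont2_3142 k \<times> dumont2_3142 (n-k))"
      by (intro image_eqI[of _ _ "(k, left_part k \<pi>, right_part n k \<pi>)"]) auto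
  qed
  show "(\<lambda>(k, \<alpha>, \<beta>). glue n k \<alpha> \<beta>) ` (SIGMA k:{..n}. dumont2_3142 k \<times> dumont2_3142 (n-k)) \<subseteq> dumont2_3142 (Suc n)"
    by (rule image_subsetI) (auto intro: glue_mem)
qed

lemma finite_dumont2: "finite (dumont2 n)"
proof (rule finite_subset)
  show "dumont2 n \<subseteq> {\<pi>. \<pi> permutes {1..2*n}}"
    using dumont2_permutes by blast
qed (simp add: finite_permutations)

lemma dumont2_3142_0: "dumont2_3142 0 = {id}"
proof -
  have "\<pi> = id" if "\<pi> \<in> dumont2_3142 0" for \<pi>
    using dumont2_permutes[OF dumont2_3142_dumont2[OF that]] by (simp add: permutes_empty)
  moreover have "id \<in> dumont2_3142 0"
    by (rule dumont2_3142I) (auto simp: permutes_id occurs_3142_def)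
  ultimately show ?thesis
    by blast
qed

lemma card_dumont2_3142_Suc:
  "card (dumont2_3142 (Suc n)) = (\<Sum>k\<le>n. card (dumont2_3142 k) * card (dumont2_3142 (n-k)))"
proof -
  have finite: "finite (dumont2_3142 m)" for m
    by (rule finite_subset[OF _ finite_dumont2]) (auto intro: dumont2_3142_dumont2)
  have "card (dumont2_3142 (Suc n)) = card (SIGMA k:{..n}. dumont2_3142 k \<times> dumont2_3142 (n-k))"
    unfolding dumont2_3142_Suc by (rule card_image[OF glue_inj])
  also have "\<dots> = (\<Sum>k\<le>n. card (dumont2_3142 k \<times> dumont2_3142 (n-k)))"
    by (rule card_SigmaI) (simp_all add: finite)
  finally show ?thesis
    by (simp add: card_cartesian_product)
qed

theorem theorem3p1:
  fixes n :: nat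
  shows "card (dumont2_av n {[3,1,4,2]}) = catalan n"
proof -
  have closed_form: "(n + 1) * card (dumont2_3142 n) = 2 * n choose n"
    by (rule convolution_recurrence_closed_form) (simp_all add: dumont2_3142_0 card_dumont2_3142_Suc)
  have "catalan n = (n + 1) * card (dumont2_3142 n) div (n + 1)"
    unfolding catalan_def closed_form ..
  also have "\<dots> = card (dumont2_3142 n)"
    by (rule nonzero_mult_div_cancel_left) simp
  finally show ?thesis
    by (simp add: dumont2_3142_def)
qed

end
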